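(* Let $p\ge1$, $0<\mu<\ell$, and real numbers $q_0,\dots,q_{p-1},r_0,\dots,r_{p-1}$. For $\nu\in[\mu,\ell]$ let $C_j(\nu):=q_j+r_j\nu$ and let $\mathbf C(\nu)\in\mathbb R^{p\times p}$ be the companion matrix with ones on the superdiagonal, last row $(C_0(\nu),C_1(\nu),\dots,C_{p-1}(\nu))$, and zeros elsewhere. Suppose there is no $\nu\in[\mu,\ell]$ with $C_0(\nu)=\dots=C_{p-1}(\nu)=0$. Then $$\sup_{\nu\in[\mu,\ell]}\rho(\mathbf C(\nu))=\sup_{\nu\in[\mu,\ell]}\liminf_{t\to\infty}\|\mathbf C(\nu)^t\|_\sigma^{1/t}\ge\liminf_{t\to\infty}\sup_{\nu\in[\mu,\ell]}\|\mathbf C(\nu)^t\|_\sigma^{1/t}.$$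
   Context: $\rho(\mathbf C)$ denotes the spectral radius (maximum modulus of an eigenvalue) and $\|\cdot\|_\sigma$ the spectral norm. *)

theory Defs
  imports "HOL-Analysis.Analysis" "Jordan_Normal_Form.Spectral_Radius"
begin

definition vec_l2 :: "real vec \<Rightarrow> real" where
  "vec_l2 x = sqrt (\<Sum>i<dim_vec x. (x $ i)\<^sup>2)"

definition spectral_norm :: "real mat \<Rightarrow> real" where
  "spectral_norm A = (SUP x \<in> {x. x \<in> carrier_vec (dim_col A) \<and> vec_l2 x = 1}. vec_l2 (A *\<^sub>v x))"

definition companion :: "nat \<Rightarrow> (nat \<Rightarrow> real) \<Rightarrow> real mat" where
  "companion p c = mat p p (\<lambda>(i,j). if i = p - 1 then c j else if j = i + 1 then 1 else 0)"

definition real_spectral_radius :: "real mat \<Rightarrow> real" where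
  "real_spectral_radius A = spectral_radius (map_mat complex_of_real A)"

end

theory Submission
  imports Defs
begin

(* If A v = alpha v for a complex eigenvector v, the real and imaginary parts of v give
   |alpha|^t <= ||A^t||, so each liminf is at least rho(A). Conversely, if rho(A) < s, the Jordan
   normal form shows that the powers of A/s' are bounded for some s' < s, hence some power satisfies
   |A^N|_1 < s^N, where |.|_1 is the entrywise l1 norm. This strict inequality is open in the
   parameter, so by compactness finitely many exponents N serve the whole interval, and
   submultiplicativity of |.|_1 gives |C(nu)^t|_1 <= W s^t uniformly in nu; finally W^(1/t) -> 1. *)

definition mat_l1_norm :: "real mat \<Rightarrow> real" where
  "mat_l1_norm A = (\<Sum>i<dim_row A. \<Sum>j<dim_col A. \<bar>A $$ (i,j)\<bar>)"

lemma index_mult_mat_sum: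
  assumes "A \<in> carrier_mat n m" "B \<in> carrier_mat m k" "i < n" "j < k"
  shows "(A * B) $$ (i,j) = (\<Sum>l<m. A $$ (i,l) * B $$ (l,j))"
  using assms by (auto simp: scalar_prod_def atLeast0LessThan intro!: sum.cong)

lemma index_mult_mat_vec_sum:
  assumes "A \<in> carrier_mat n m" "x \<in> carrier_vec m" "i < n"
  shows "(A *\<^sub>v x) $ i = (\<Sum>l<m. A $$ (i,l) * x $ l)"
  using assms by (auto simp: scalar_prod_def atLeast0LessThan intro!: sum.cong)

lemma pow_mat_add:
  assumes A: "A \<in> carrier_mat n n"
  shows "A ^\<^sub>m (a + b) = A ^\<^sub>m a * A ^\<^sub>m b"
proof (induction b)
  case 0
  then show ?case using A by simp
next
  case (Suc b)
  have "A ^\<^sub>m (a + Suc b) = (A ^\<^sub>m a * A ^\<^sub>m b) * A" using Suc by simp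
  also have "\<dots> = A ^\<^sub>m a * (A ^\<^sub>m b * A)"
    by (rule assoc_mult_mat[of _ n n _ n _ n]) (use A in auto)
  finally show ?case by simp
qed

lemma smult_mat_mult_mat_vec:
  assumes "A \<in> carrier_mat n m" "v \<in> carrier_vec m"
  shows "(c \<cdot>\<^sub>m A) *\<^sub>v v = (c :: 'a :: comm_semiring_0) \<cdot>\<^sub>v (A *\<^sub>v v)"
  using assms by (intro eq_vecI) (auto simp: scalar_prod_def sum_distrib_left ac_simps)

lemma pow_mat_smult:
  assumes A: "(A :: 'a :: comm_semiring_1 mat) \<in> carrier_mat n n"
  shows "(c \<cdot>\<^sub>m A) ^\<^sub>m k = c ^ k \<cdot>\<^sub>m (A ^\<^sub>m k)"
proof (induction k)
  case 0
  then show ?case by (intro eq_matI) auto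
next
  case (Suc k)
  have Ak: "A ^\<^sub>m k \<in> carrier_mat n n" using A by simp
  have "(c \<cdot>\<^sub>m A) ^\<^sub>m Suc k = c ^ k \<cdot>\<^sub>m (A ^\<^sub>m k * (c \<cdot>\<^sub>m A))"
    using Suc mult_smult_assoc_mat[OF Ak, of "c \<cdot>\<^sub>m A" n] A by simp
  also have "\<dots> = c ^ Suc k \<cdot>\<^sub>m (A ^\<^sub>m Suc k)"
    using mult_smult_distrib[OF Ak A] by (intro eq_matI) (auto simp: ac_simps)
  finally show ?case .
qed

lemma mat_l1_norm_nonneg: "0 \<le> mat_l1_norm A"
  unfolding mat_l1_norm_def by (intro sum_nonneg) auto

lemma mat_l1_norm_mult_le:
  assumes A: "A \<in> carrier_mat n m" and B: "B \<in> carrier_mat m k"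
  shows "mat_l1_norm (A * B) \<le> mat_l1_norm A * mat_l1_norm B"
proof -
  have row_le: "(\<Sum>j<k. \<bar>B $$ (l,j)\<bar>) \<le> mat_l1_norm B" if "l < m" for l
    unfolding mat_l1_norm_def using B that
    by (auto intro!: member_le_sum[where f = "\<lambda>l. \<Sum>j<k. \<bar>B $$ (l,j)\<bar>"] sum_nonneg)
  have "mat_l1_norm (A * B) = (\<Sum>i<n. \<Sum>j<k. \<bar>\<Sum>l<m. A $$ (i,l) * B $$ (l,j)\<bar>)"
    unfolding mat_l1_norm_def using A B
    by (auto simp del: index_mult_mat simp: index_mult_mat_sum[OF A B] intro!: sum.cong, auto)
  also have "\<dots> \<le> (\<Sum>i<n. \<Sum>j<k. \<Sum>l<m. \<bar>A $$ (i,l)\<bar> * \<bar>B $$ (l,j)\<bar>)"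
    by (intro sum_mono) (metis (no_types, lifting) abs_mult sum.cong sum_abs)
  also have "\<dots> = (\<Sum>i<n. \<Sum>l<m. \<bar>A $$ (i,l)\<bar> * (\<Sum>j<k. \<bar>B $$ (l,j)\<bar>))"
    by (simp add: sum.swap[of _ "{..<k}"] sum_distrib_left)
  also have "\<dots> \<le> (\<Sum>i<n. \<Sum>l<m. \<bar>A $$ (i,l)\<bar> * mat_l1_norm B)"
    by (intro sum_mono mult_left_mono row_le) auto
  also have "\<dots> = mat_l1_norm A * mat_l1_norm B"
    unfolding mat_l1_norm_def using A by (simp add: sum_distrib_right)
  finally show ?thesis .
qed

lemma mat_l1_norm_pow_add_le:
  assumes A: "A \<in> carrier_mat n n"
  shows "mat_l1_norm (A ^\<^sub>m (a + b)) \<le> mat_l1_norm (A ^\<^sub>m a) * mat_l1_norm (A ^\<^sub>m b)"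
  unfolding pow_mat_add[OF A] using A by (intro mat_l1_norm_mult_le[of _ n n _ n]) auto

lemma vec_l2_nonneg: "0 \<le> vec_l2 x"
  unfolding vec_l2_def by (simp add: sum_nonneg)

lemma vec_l2_power2: "(vec_l2 x)\<^sup>2 = (\<Sum>i<dim_vec x. (x $ i)\<^sup>2)"
  unfolding vec_l2_def by (simp add: sum_nonneg)

lemma abs_le_vec_l2:
  assumes "i < dim_vec x"
  shows "\<bar>x $ i\<bar> \<le> vec_l2 x"
proof -
  have "(x $ i)\<^sup>2 \<le> (\<Sum>i<dim_vec x. (x $ i)\<^sup>2)"
    using assms by (intro member_le_sum) auto
  then show ?thesis unfolding vec_l2_def by (simp add: real_le_rsqrt)
qed

lemma vec_l2_smult: "vec_l2 (c \<cdot>\<^sub>v x) = \<bar>c\<bar> * vec_l2 x"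
  unfolding vec_l2_def by (simp add: power_mult_distrib real_sqrt_mult flip: sum_distrib_left)

lemma vec_l2_unit_vec:
  assumes "j < m"
  shows "vec_l2 (unit_vec m j) = 1"
proof -
  have "(\<Sum>i<m. (unit_vec m j $ i)\<^sup>2) = (\<Sum>i<m. if i = j then 1 else (0::real))"
    by (intro sum.cong) (auto simp: unit_vec_def)
  then show ?thesis using assms unfolding vec_l2_def by simp
qed

lemma vec_l2_mult_mat_vec_le_l1:
  assumes A: "A \<in> carrier_mat n m" and x: "x \<in> carrier_vec m"
  shows "vec_l2 (A *\<^sub>v x) \<le> mat_l1_norm A * vec_l2 x"
proof -
  let ?a = "\<lambda>i. \<Sum>j<m. \<bar>A $$ (i,j)\<bar>"
  have entry: "\<bar>(A *\<^sub>v x) $ i\<bar> \<le> vec_l2 x * ?a i" if "i < n" for i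
  proof -
    have "\<bar>(A *\<^sub>v x) $ i\<bar> \<le> (\<Sum>l<m. \<bar>A $$ (i,l)\<bar> * \<bar>x $ l\<bar>)"
      unfolding index_mult_mat_vec_sum[OF A x that]
      by (metis (no_types, lifting) abs_mult sum.cong sum_abs)
    also have "\<dots> \<le> (\<Sum>l<m. \<bar>A $$ (i,l)\<bar> * vec_l2 x)"
      using x by (intro sum_mono mult_left_mono abs_le_vec_l2) auto
    finally show ?thesis by (simp add: sum_distrib_left mult.commute)
  qed
  have "vec_l2 (A *\<^sub>v x) = L2_set (\<lambda>i. \<bar>(A *\<^sub>v x) $ i\<bar>) {..<n}"
    unfolding vec_l2_def L2_set_def using A by simp
  also have "\<dots> \<le> L2_set (\<lambda>i. vec_l2 x * ?a i) {..<n}"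
    by (intro L2_set_mono entry) auto
  also have "\<dots> = vec_l2 x * L2_set ?a {..<n}"
    by (rule L2_set_right_distrib[OF vec_l2_nonneg, symmetric])
  also have "\<dots> \<le> vec_l2 x * mat_l1_norm A"
    unfolding mat_l1_norm_def using A
    by (auto intro!: mult_left_mono L2_set_le_sum vec_l2_nonneg sum_nonneg)
  finally show ?thesis by (simp add: mult.commute)
qed

lemma vec_l2_le_spectral_norm:
  assumes "A \<in> carrier_mat n m" "x \<in> carrier_vec m" "vec_l2 x = 1"
  shows "vec_l2 (A *\<^sub>v x) \<le> spectral_norm A"
proof -
  have "vec_l2 (A *\<^sub>v y) \<le> mat_l1_norm A" if "y \<in> carrier_vec m" "vec_l2 y = 1" for y
    using vec_l2_mult_mat_vec_le_l1[OF assms(1) that(1)] that(2) by simp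
  then show ?thesis
    unfolding spectral_norm_def using assms by (intro cSUP_upper bdd_aboveI[of _ "mat_l1_norm A"]) auto
qed

lemma spectral_norm_le_mat_l1_norm:
  assumes A: "A \<in> carrier_mat n m" and "0 < m"
  shows "spectral_norm A \<le> mat_l1_norm A"
proof -
  have "{x. x \<in> carrier_vec m \<and> vec_l2 x = 1} \<noteq> {}"
    using vec_l2_unit_vec[OF \<open>0 < m\<close>] unit_vec_carrier by blast
  moreover have "vec_l2 (A *\<^sub>v y) \<le> mat_l1_norm A" if "y \<in> carrier_vec m" "vec_l2 y = 1" for y
    using vec_l2_mult_mat_vec_le_l1[OF A that(1)] that(2) by simp
  ultimately show ?thesis
    unfolding spectral_norm_def using A by (intro cSUP_least) auto
qed

lemma spectral_norm_nonneg:
  assumes "A \<in> carrier_mat n m" "0 < m"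
  shows "0 \<le> spectral_norm A"
  using vec_l2_le_spectral_norm[OF assms(1) unit_vec_carrier vec_l2_unit_vec[OF assms(2)]]
    vec_l2_nonneg order_trans by blast

lemma vec_l2_mult_mat_vec_le:
  assumes A: "A \<in> carrier_mat n m" and x: "x \<in> carrier_vec m"
  shows "vec_l2 (A *\<^sub>v x) \<le> spectral_norm A * vec_l2 x"
proof (cases "vec_l2 x = 0")
  case True
  then show ?thesis using vec_l2_mult_mat_vec_le_l1[OF A x] vec_l2_nonneg[of "A *\<^sub>v x"] by simp
next
  case False
  then have L: "0 < vec_l2 x" using vec_l2_nonneg[of x] by simp
  have "vec_l2 (A *\<^sub>v ((1 / vec_l2 x) \<cdot>\<^sub>v x)) \<le> spectral_norm A"
    using L x by (intro vec_l2_le_spectral_norm[OF A]) (auto simp: vec_l2_smult)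
  then show ?thesis using L by (simp add: mult_mat_vec[OF A x] vec_l2_smult divide_le_eq)
qed

lemma mult_mat_vec_of_real_Re_Im:
  assumes B: "B \<in> carrier_mat n m" and v: "v \<in> carrier_vec m"
  shows "map_vec Re (map_mat complex_of_real B *\<^sub>v v) = B *\<^sub>v map_vec Re v"
    and "map_vec Im (map_mat complex_of_real B *\<^sub>v v) = B *\<^sub>v map_vec Im v"
  using assms by (auto intro!: eq_vecI simp: scalar_prod_def Re_sum Im_sum)

lemma vec_l2_Re_Im:
  "(vec_l2 (map_vec Re v))\<^sup>2 + (vec_l2 (map_vec Im v))\<^sup>2 = (\<Sum>i<dim_vec v. (cmod (v $ i))\<^sup>2)"
  unfolding vec_l2_power2 by (simp add: cmod_power2 sum.distrib)

lemma norm_eigenvalue_le_spectral_norm: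
  assumes B: "B \<in> carrier_mat n n"
    and ev: "eigenvector (map_mat complex_of_real B) v \<alpha>"
  shows "cmod \<alpha> \<le> spectral_norm B"
proof -
  have v: "v \<in> carrier_vec n" and v0: "v \<noteq> 0\<^sub>v n"
    and Bv: "map_mat complex_of_real B *\<^sub>v v = \<alpha> \<cdot>\<^sub>v v"
    using ev B unfolding eigenvector_def by auto
  define x y where "x = map_vec Re v" and "y = map_vec Im v"
  define Q where "Q = (\<Sum>i<n. (cmod (v $ i))\<^sup>2)"
  have x: "x \<in> carrier_vec n" and y: "y \<in> carrier_vec n" using v unfolding x_def y_def by auto
  have Qxy: "Q = (vec_l2 x)\<^sup>2 + (vec_l2 y)\<^sup>2"
    unfolding Q_def x_def y_def vec_l2_Re_Im using v by simp
  obtain i where i: "i < n" and vi: "v $ i \<noteq> 0"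
    using v v0 by (metis carrier_vecD eq_vecI index_zero_vec)
  have "0 < (cmod (v $ i))\<^sup>2" using vi by simp
  also have "\<dots> \<le> Q" unfolding Q_def using i by (intro member_le_sum) auto
  finally have Q: "0 < Q" .
  have n: "0 < n" using i by simp
  \<comment> \<open>B is real, so it maps Re v and Im v to Re (\<alpha> v) and Im (\<alpha> v).\<close>
  have "(cmod \<alpha>)\<^sup>2 * Q = (vec_l2 (B *\<^sub>v x))\<^sup>2 + (vec_l2 (B *\<^sub>v y))\<^sup>2"
    using vec_l2_Re_Im[of "\<alpha> \<cdot>\<^sub>v v"] v
    by (simp add: x_def y_def Bv flip: mult_mat_vec_of_real_Re_Im[OF B v])
       (simp add: Q_def norm_mult power_mult_distrib sum_distrib_left)
  also have "\<dots> \<le> (spectral_norm B * vec_l2 x)\<^sup>2 + (spectral_norm B * vec_l2 y)\<^sup>2"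
    by (intro add_mono power_mono vec_l2_mult_mat_vec_le[OF B] x y vec_l2_nonneg)
  also have "\<dots> = (spectral_norm B)\<^sup>2 * Q"
    unfolding Qxy by (simp add: power_mult_distrib distrib_left)
  finally have "(cmod \<alpha>)\<^sup>2 \<le> (spectral_norm B)\<^sup>2" using Q by simp
  then show ?thesis using spectral_norm_nonneg[OF B n] by (rule power2_le_imp_le)
qed

lemma real_spectral_radius_mem:
  assumes "A \<in> carrier_mat n n" "0 < n"
  shows "real_spectral_radius A \<in> cmod ` spectrum (map_mat complex_of_real A)"
  unfolding real_spectral_radius_def using assms by (intro spectral_radius_mem_max(1)) auto

lemma real_spectral_radius_nonneg:
  assumes "A \<in> carrier_mat n n" "0 < n"
  shows "0 \<le> real_spectral_radius A"
  using real_spectral_radius_mem[OF assms] by auto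

lemma real_spectral_radius_pow_le_spectral_norm:
  assumes A: "A \<in> carrier_mat n n" and n: "0 < n"
  shows "real_spectral_radius A ^ t \<le> spectral_norm (A ^\<^sub>m t)"
proof -
  let ?Ac = "map_mat complex_of_real A"
  obtain \<alpha> v where ev: "eigenvector ?Ac v \<alpha>" and \<alpha>: "cmod \<alpha> = real_spectral_radius A"
    using real_spectral_radius_mem[OF A n] unfolding spectrum_def eigenvalue_def by auto
  have "?Ac ^\<^sub>m t = map_mat complex_of_real (A ^\<^sub>m t)"
    by (rule of_real_hom.mat_hom_pow[OF A, symmetric])
  then have "eigenvector (map_mat complex_of_real (A ^\<^sub>m t)) v (\<alpha> ^ t)"
    using ev eigenvector_pow[of ?Ac n v \<alpha> t] A unfolding eigenvector_def by auto
  then have "cmod (\<alpha> ^ t) \<le> spectral_norm (A ^\<^sub>m t)"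
    using A by (intro norm_eigenvalue_le_spectral_norm[of _ n]) auto
  then show ?thesis by (simp add: \<alpha> norm_power)
qed

lemma spectral_radius_smult_mat_le:
  assumes A: "A \<in> carrier_mat n n" and n: "0 < n" and c: "c \<noteq> 0"
  shows "spectral_radius (c \<cdot>\<^sub>m A) \<le> cmod c * spectral_radius A"
proof -
  have cA: "c \<cdot>\<^sub>m A \<in> carrier_mat n n" using A by simp
  obtain \<mu> v where \<mu>: "cmod \<mu> = spectral_radius (c \<cdot>\<^sub>m A)"
    and v: "v \<in> carrier_vec n" "v \<noteq> 0\<^sub>v n" and cAv: "c \<cdot>\<^sub>v (A *\<^sub>v v) = \<mu> \<cdot>\<^sub>v v"
    using spectral_radius_mem_max(1)[OF cA n] A
    unfolding spectrum_def eigenvalue_def eigenvector_def by (auto simp: smult_mat_mult_mat_vec)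
  have "A *\<^sub>v v = (\<mu> / c) \<cdot>\<^sub>v v"
    using arg_cong[OF cAv, of "\<lambda>w. (1 / c) \<cdot>\<^sub>v w"] c by (simp add: smult_smult_assoc)
  then have "cmod (\<mu> / c) \<in> cmod ` spectrum A"
    using A v unfolding spectrum_def eigenvalue_def eigenvector_def by auto
  then have "cmod (\<mu> / c) \<le> spectral_radius A" by (rule spectral_radius_mem_max(2)[OF A n])
  then show ?thesis using \<mu> c by (simp add: norm_divide divide_le_eq mult.commute)
qed

lemma ex_mat_l1_norm_pow_le_geometric:
  assumes A: "A \<in> carrier_mat n n" and n: "0 < n" and \<rho>: "real_spectral_radius A < s"
  shows "\<exists>W>0. \<forall>k. mat_l1_norm (A ^\<^sub>m k) \<le> W * s ^ k"
proof -
  have s: "0 < s" using real_spectral_radius_nonneg[OF A n] \<rho> by linarith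
  define B where "B = complex_of_real (1 / s) \<cdot>\<^sub>m map_mat complex_of_real A"
  have B: "B \<in> carrier_mat n n" unfolding B_def using A by simp
  have "spectral_radius B \<le> cmod (complex_of_real (1 / s)) * real_spectral_radius A"
    unfolding B_def real_spectral_radius_def using s A n by (intro spectral_radius_smult_mat_le) auto
  also have "\<dots> < 1" using \<rho> s by (simp add: norm_divide field_simps)
  finally obtain c where c: "\<And>k. norm_bound (B ^\<^sub>m k) c"
    using spectral_radius_jnf_norm_bound_less_1_upper_triangular[OF B] by auto
  have entry: "\<bar>(A ^\<^sub>m k) $$ (i,j)\<bar> \<le> c * s ^ k" if "i < n" "j < n" for k i j
  proof -
    have "B ^\<^sub>m k = complex_of_real (1 / s) ^ k \<cdot>\<^sub>m map_mat complex_of_real (A ^\<^sub>m k)"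
      unfolding B_def using A by (simp add: pow_mat_smult of_real_hom.mat_hom_pow)
    then have "(1 / s) ^ k * \<bar>(A ^\<^sub>m k) $$ (i,j)\<bar> \<le> c"
      using c[of k] A B that s unfolding norm_bound_def by (simp add: norm_mult norm_power norm_divide)
    then show ?thesis using s by (simp add: field_simps)
  qed
  have "mat_l1_norm (A ^\<^sub>m k) \<le> max 1 (n * n * c) * s ^ k" for k
  proof -
    have "mat_l1_norm (A ^\<^sub>m k) = (\<Sum>i<n. \<Sum>j<n. \<bar>(A ^\<^sub>m k) $$ (i,j)\<bar>)"
      unfolding mat_l1_norm_def using A by simp
    also have "\<dots> \<le> (\<Sum>i<n. \<Sum>j<n. c * s ^ k)" by (intro sum_mono entry) auto
    also have "\<dots> = (n * n * c) * s ^ k" by simp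
    also have "\<dots> \<le> max 1 (n * n * c) * s ^ k" using s by (intro mult_right_mono) auto
    finally show ?thesis .
  qed
  then show ?thesis by (intro exI[of _ "max 1 (n * n * c)"]) auto
qed

lemma ex_mat_l1_norm_pow_less_power:
  assumes A: "A \<in> carrier_mat n n" and n: "0 < n" and \<rho>: "real_spectral_radius A < s"
  shows "\<exists>N\<ge>1. mat_l1_norm (A ^\<^sub>m N) < s ^ N"
proof -
  define s' where "s' = (real_spectral_radius A + s) / 2"
  have s': "0 < s'" "s' < s" "real_spectral_radius A < s'"
    using \<rho> real_spectral_radius_nonneg[OF A n] unfolding s'_def by auto
  obtain W where W: "\<And>k. mat_l1_norm (A ^\<^sub>m k) \<le> W * s' ^ k"
    using ex_mat_l1_norm_pow_le_geometric[OF A n s'(3)] by blast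
  have "(\<lambda>N. W * (s' / s) ^ N) \<longlonglongrightarrow> W * 0"
    using s' by (intro tendsto_mult tendsto_const LIMSEQ_realpow_zero) auto
  then have "eventually (\<lambda>N. W * (s' / s) ^ N < 1) sequentially"
    by (intro order_tendstoD(2)) auto
  then obtain N0 where N0: "\<And>N. N0 \<le> N \<Longrightarrow> W * (s' / s) ^ N < 1"
    unfolding eventually_sequentially by blast
  have "mat_l1_norm (A ^\<^sub>m Suc N0) \<le> W * (s' / s) ^ Suc N0 * s ^ Suc N0"
    using W[of "Suc N0"] s' by (simp add: power_divide)
  also have "\<dots> < s ^ Suc N0" using N0[of "Suc N0"] s' by simp
  finally show ?thesis by (intro exI[of _ "Suc N0"]) simp
qed

lemma submultiplicative_le_geometric:
  fixes u :: "nat \<Rightarrow> real"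
  assumes mult: "\<And>a b. u (a + b) \<le> u a * u b" and nonneg: "\<And>k. 0 \<le> u k" and s: "0 < s"
    and N: "1 \<le> N" "N \<le> L" "u N \<le> s ^ N" and M: "\<And>k. k < L \<Longrightarrow> u k \<le> M"
  shows "u t \<le> M * (\<Sum>k<L. (1 / s) ^ k) * s ^ t"
proof (induction t rule: less_induct)
  case (less t)
  show ?case
  proof (cases "t < L")
    case True
    have "0 \<le> M" using M[of 0] nonneg[of 0] N by linarith
    have "u t \<le> M * (1 / s) ^ t * s ^ t" using M[OF True] s by (simp add: power_one_over)
    also have "\<dots> \<le> M * (\<Sum>k<L. (1 / s) ^ k) * s ^ t"
      using True s \<open>0 \<le> M\<close>
      by (intro mult_right_mono mult_left_mono member_le_sum[where f = "\<lambda>k. (1 / s) ^ k"]) auto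
    finally show ?thesis .
  next
    case False
    then have "N \<le> t" using N by simp
    then obtain d where t: "t = N + d" by (auto dest: le_Suc_ex)
    have "u t \<le> u N * u d" unfolding t by (rule mult)
    also have "\<dots> \<le> s ^ N * (M * (\<Sum>k<L. (1 / s) ^ k) * s ^ d)"
      using N t less.IH[of d] s nonneg by (intro mult_mono) auto
    also have "\<dots> = M * (\<Sum>k<L. (1 / s) ^ k) * s ^ t"
      unfolding t by (simp add: power_add ac_simps)
    finally show ?thesis .
  qed
qed

lemma continuous_on_pow_mat_entry:
  fixes A :: "'a :: topological_space \<Rightarrow> real mat"
  assumes A: "\<And>x. A x \<in> carrier_mat n n"
    and cont: "\<And>i j. i < n \<Longrightarrow> j < n \<Longrightarrow> continuous_on S (\<lambda>x. A x $$ (i,j))"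
    and "i < n" "j < n"
  shows "continuous_on S (\<lambda>x. (A x ^\<^sub>m k) $$ (i,j))"
  using assms(3,4)
proof (induction k arbitrary: j)
  case 0
  have "(A x ^\<^sub>m 0) $$ (i,j) = (if i = j then 1 else 0)" for x
    using A[of x] 0 \<open>i < n\<close> by auto
  then show ?case by (simp add: continuous_on_const)
next
  case (Suc k)
  have "(A x ^\<^sub>m Suc k) $$ (i,j) = (\<Sum>l<n. (A x ^\<^sub>m k) $$ (i,l) * A x $$ (l,j))" for x
    using index_mult_mat_sum[of "A x ^\<^sub>m k" n n "A x" n i j] A[of x] Suc.prems by simp
  moreover have "continuous_on S (\<lambda>x. \<Sum>l<n. (A x ^\<^sub>m k) $$ (i,l) * A x $$ (l,j))"
    by (rule continuous_on_sum, rule continuous_on_mult) (use Suc cont in auto)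
  ultimately show ?case by simp
qed

lemma continuous_on_mat_l1_norm_pow:
  fixes A :: "'a :: topological_space \<Rightarrow> real mat"
  assumes A: "\<And>x. A x \<in> carrier_mat n n"
    and cont: "\<And>i j. i < n \<Longrightarrow> j < n \<Longrightarrow> continuous_on S (\<lambda>x. A x $$ (i,j))"
  shows "continuous_on S (\<lambda>x. mat_l1_norm (A x ^\<^sub>m k))"
proof -
  have "mat_l1_norm (A x ^\<^sub>m k) = (\<Sum>i<n. \<Sum>j<n. \<bar>(A x ^\<^sub>m k) $$ (i,j)\<bar>)" for x
    unfolding mat_l1_norm_def using A[of x] by simp
  then show ?thesis
    by (auto intro!: continuous_on_sum continuous_on_rabs continuous_on_pow_mat_entry[OF A cont])
qed

lemma ex_mat_l1_norm_pow_le_geometric_uniform: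
  fixes A :: "'a :: topological_space \<Rightarrow> real mat"
  assumes A: "\<And>x. A x \<in> carrier_mat n n" and n: "0 < n"
    and cont: "\<And>i j. i < n \<Longrightarrow> j < n \<Longrightarrow> continuous_on UNIV (\<lambda>x. A x $$ (i,j))"
    and K: "compact K" and s: "0 < s" and \<rho>: "\<And>x. x \<in> K \<Longrightarrow> real_spectral_radius (A x) < s"
  shows "\<exists>W>0. \<forall>x\<in>K. \<forall>t. mat_l1_norm (A x ^\<^sub>m t) \<le> W * s ^ t"
proof -
  define U where "U N = {x. mat_l1_norm (A x ^\<^sub>m N) < s ^ N}" for N
  have "open (U N)" for N
    unfolding U_def by (intro open_Collect_less continuous_on_mat_l1_norm_pow[OF A cont] continuous_intros)
  moreover have "K \<subseteq> (\<Union>N\<in>{1..}. U N)"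
  proof
    fix x assume "x \<in> K"
    then obtain N where "1 \<le> N" "mat_l1_norm (A x ^\<^sub>m N) < s ^ N"
      using ex_mat_l1_norm_pow_less_power[OF A n \<rho>] by blast
    then show "x \<in> (\<Union>N\<in>{1..}. U N)" unfolding U_def by auto
  qed
  ultimately obtain C where C: "C \<subseteq> {1..}" "finite C" "K \<subseteq> (\<Union>N\<in>C. U N)"
    by (rule compactE_image[OF K])
  define L where "L = Max (insert 1 C)"
  have "continuous_on UNIV (\<lambda>x. \<Sum>k<L. mat_l1_norm (A x ^\<^sub>m k))"
    by (intro continuous_on_sum continuous_on_mat_l1_norm_pow[OF A cont])
  then have "compact ((\<lambda>x. \<Sum>k<L. mat_l1_norm (A x ^\<^sub>m k)) ` K)"
    by (rule compact_continuous_image[OF continuous_on_subset[OF _ subset_UNIV] K])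
  then have "bdd_above ((\<lambda>x. \<Sum>k<L. mat_l1_norm (A x ^\<^sub>m k)) ` K)"
    by (intro bounded_imp_bdd_above compact_imp_bounded)
  then obtain M where M: "\<And>x. x \<in> K \<Longrightarrow> (\<Sum>k<L. mat_l1_norm (A x ^\<^sub>m k)) \<le> M"
    by (auto simp: bdd_above_def)
  define W where "W = max 1 (M * (\<Sum>k<L. (1 / s) ^ k))"
  have "mat_l1_norm (A x ^\<^sub>m t) \<le> W * s ^ t" if x: "x \<in> K" for x t
  proof -
    obtain N where N: "N \<in> C" "mat_l1_norm (A x ^\<^sub>m N) < s ^ N"
      using C(3) x unfolding U_def by blast
    have "mat_l1_norm (A x ^\<^sub>m t) \<le> M * (\<Sum>k<L. (1 / s) ^ k) * s ^ t"
    proof (rule submultiplicative_le_geometric[OF mat_l1_norm_pow_add_le[OF A] mat_l1_norm_nonneg s])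
      show "1 \<le> N" "N \<le> L" "mat_l1_norm (A x ^\<^sub>m N) \<le> s ^ N"
        using N C unfolding L_def by auto
      show "mat_l1_norm (A x ^\<^sub>m k) \<le> M" if "k < L" for k
      proof -
        have "mat_l1_norm (A x ^\<^sub>m k) \<le> (\<Sum>k<L. mat_l1_norm (A x ^\<^sub>m k))"
          using that by (intro member_le_sum mat_l1_norm_nonneg) auto
        then show ?thesis using M[OF x] by linarith
      qed
    qed
    also have "\<dots> \<le> W * s ^ t" unfolding W_def using s by (intro mult_right_mono) auto
    finally show ?thesis .
  qed
  moreover have "0 < W" unfolding W_def by simp
  ultimately show ?thesis by blast
qed

lemma power_powr_inverse:
  assumes "0 \<le> x" "0 < t"
  shows "(x ^ t) powr (1 / real t) = x"
proof (cases "x = 0")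
  case False
  then have "(x ^ t) powr (1 / real t) = (x powr real t) powr (1 / real t)"
    using assms by (simp add: powr_realpow)
  also have "\<dots> = x" using assms by (simp add: powr_powr)
  finally show ?thesis .
qed (use assms in simp)

lemma liminf_SUP_root_le:
  fixes f :: "'a \<Rightarrow> nat \<Rightarrow> real"
  assumes W: "0 < W" and s: "0 < s"
    and f: "\<And>x t. x \<in> K \<Longrightarrow> 0 \<le> f x t" "\<And>x t. x \<in> K \<Longrightarrow> f x t \<le> W * s ^ t"
  shows "liminf (\<lambda>t. SUP x\<in>K. ereal (f x t powr (1 / real t))) \<le> ereal s"
proof -
  have "eventually (\<lambda>t. (SUP x\<in>K. ereal (f x t powr (1 / real t))) \<le> ereal (W powr (1 / real t) * s))
          sequentially"
    using eventually_ge_at_top[of "1::nat"]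
  proof eventually_elim
    case (elim t)
    have "f x t powr (1 / real t) \<le> W powr (1 / real t) * s" if "x \<in> K" for x
    proof -
      have "f x t powr (1 / real t) \<le> (W * s ^ t) powr (1 / real t)"
        using f that by (intro powr_mono2) auto
      also have "\<dots> = W powr (1 / real t) * s"
        using W s elim by (simp add: powr_mult power_powr_inverse)
      finally show ?thesis .
    qed
    then show ?case by (intro SUP_least) auto
  qed
  then have "liminf (\<lambda>t. SUP x\<in>K. ereal (f x t powr (1 / real t)))
      \<le> liminf (\<lambda>t. ereal (W powr (1 / real t) * s))"
    by (rule Liminf_mono)
  also have "\<dots> = ereal s"
  proof (rule lim_imp_Liminf[OF trivial_limit_sequentially])
    have "(\<lambda>t. W powr (1 / real t) * s) \<longlonglongrightarrow> W powr 0 * s"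
      using W by (intro tendsto_intros lim_1_over_n) auto
    then show "(\<lambda>t. ereal (W powr (1 / real t) * s)) \<longlonglongrightarrow> ereal s"
      using W by (simp add: tendsto_ereal)
  qed
  finally show ?thesis .
qed

lemma ereal_le_real_strict:
  fixes x y :: ereal
  assumes "\<And>s. x < ereal s \<Longrightarrow> y \<le> ereal s"
  shows "y \<le> x"
proof (rule dense_ge)
  fix z assume "x < z"
  then show "y \<le> z" using assms by (cases z) auto
qed

lemma liminf_SUP_root_spectral_norm_pow_le_geometric:
  assumes A: "\<And>x. x \<in> K \<Longrightarrow> A x \<in> carrier_mat n n" and n: "0 < n"
    and W: "0 < W" and s: "0 < s"
    and bound: "\<And>x t. x \<in> K \<Longrightarrow> mat_l1_norm (A x ^\<^sub>m t) \<le> W * s ^ t"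
  shows "liminf (\<lambda>t. SUP x\<in>K. ereal (spectral_norm (A x ^\<^sub>m t) powr (1 / real t))) \<le> ereal s"
proof (rule liminf_SUP_root_le[OF W s])
  fix x t assume x: "x \<in> K"
  have At: "A x ^\<^sub>m t \<in> carrier_mat n n" using A[OF x] by simp
  show "0 \<le> spectral_norm (A x ^\<^sub>m t)" by (rule spectral_norm_nonneg[OF At n])
  show "spectral_norm (A x ^\<^sub>m t) \<le> W * s ^ t"
    using spectral_norm_le_mat_l1_norm[OF At n] bound[OF x] by (rule order_trans)
qed

lemma liminf_root_spectral_norm_pow_eq_real_spectral_radius:
  assumes A: "A \<in> carrier_mat n n" and n: "0 < n"
  shows "liminf (\<lambda>t. ereal (spectral_norm (A ^\<^sub>m t) powr (1 / real t)))
    = ereal (real_spectral_radius A)"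
proof (rule antisym)
  show "liminf (\<lambda>t. ereal (spectral_norm (A ^\<^sub>m t) powr (1 / real t)))
      \<le> ereal (real_spectral_radius A)"
  proof (rule ereal_le_real_strict)
    fix s assume "ereal (real_spectral_radius A) < ereal s"
    then have \<rho>: "real_spectral_radius A < s" by simp
    then have s: "0 < s" using real_spectral_radius_nonneg[OF A n] by linarith
    obtain W where "0 < W" "\<And>k. mat_l1_norm (A ^\<^sub>m k) \<le> W * s ^ k"
      using ex_mat_l1_norm_pow_le_geometric[OF A n \<rho>] by blast
    then show "liminf (\<lambda>t. ereal (spectral_norm (A ^\<^sub>m t) powr (1 / real t))) \<le> ereal s"
      using liminf_SUP_root_spectral_norm_pow_le_geometric[of "{A}" "\<lambda>B. B" n W s] A n s by simp
  qed
  have "ereal (real_spectral_radius A) \<le> ereal (spectral_norm (A ^\<^sub>m t) powr (1 / real t))"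
    if "1 \<le> t" for t
  proof -
    have "real_spectral_radius A = (real_spectral_radius A ^ t) powr (1 / real t)"
      using real_spectral_radius_nonneg[OF A n] that by (simp add: power_powr_inverse)
    also have "\<dots> \<le> spectral_norm (A ^\<^sub>m t) powr (1 / real t)"
      using real_spectral_radius_pow_le_spectral_norm[OF A n] real_spectral_radius_nonneg[OF A n]
      by (intro powr_mono2) auto
    finally show ?thesis by simp
  qed
  then show "ereal (real_spectral_radius A)
      \<le> liminf (\<lambda>t. ereal (spectral_norm (A ^\<^sub>m t) powr (1 / real t)))"
    by (intro Liminf_bounded) (auto simp: eventually_sequentially)
qed

lemma liminf_SUP_root_spectral_norm_pow_le_SUP:
  fixes A :: "'a :: topological_space \<Rightarrow> real mat"
  assumes A: "\<And>x. A x \<in> carrier_mat n n" and n: "0 < n"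
    and cont: "\<And>i j. i < n \<Longrightarrow> j < n \<Longrightarrow> continuous_on UNIV (\<lambda>x. A x $$ (i,j))"
    and K: "compact K"
  shows "liminf (\<lambda>t. SUP x\<in>K. ereal (spectral_norm (A x ^\<^sub>m t) powr (1 / real t)))
    \<le> (SUP x\<in>K. ereal (real_spectral_radius (A x)))"
proof (cases "K = {}")
  case True
  then show ?thesis by (simp add: Liminf_const)
next
  case False
  then obtain x0 where "x0 \<in> K" by blast
  show ?thesis
  proof (rule ereal_le_real_strict)
    fix s assume s: "(SUP x\<in>K. ereal (real_spectral_radius (A x))) < ereal s"
    have \<rho>: "real_spectral_radius (A x) < s" if "x \<in> K" for x
      using SUP_lessD[OF s that] by simp
    have s0: "0 < s" using \<rho>[OF \<open>x0 \<in> K\<close>] real_spectral_radius_nonneg[OF A n, of x0] by linarith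
    obtain W where W: "0 < W" and bound: "\<And>x t. x \<in> K \<Longrightarrow> mat_l1_norm (A x ^\<^sub>m t) \<le> W * s ^ t"
      using ex_mat_l1_norm_pow_le_geometric_uniform[OF A n cont K s0 \<rho>] by blast
    show "liminf (\<lambda>t. SUP x\<in>K. ereal (spectral_norm (A x ^\<^sub>m t) powr (1 / real t))) \<le> ereal s"
      by (rule liminf_SUP_root_spectral_norm_pow_le_geometric[OF _ n W s0 bound]) (rule A)
  qed
qed

theorem lemma26:
  fixes p :: nat and \<mu> l :: real and q r :: "nat \<Rightarrow> real"
  assumes "p \<ge> 1" and "0 < \<mu>" and "\<mu> < l"
    and "\<not> (\<exists>\<nu>\<in>{\<mu>..l}. \<forall>j<p. q j + r j * \<nu> = 0)"
  shows "(SUP \<nu>\<in>{\<mu>..l}. ereal (real_spectral_radius (companion p (\<lambda>j. q j + r j * \<nu>))))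
           = (SUP \<nu>\<in>{\<mu>..l}. liminf (\<lambda>t::nat. ereal (spectral_norm (companion p (\<lambda>j. q j + r j * \<nu>) ^\<^sub>m t) powr (1 / real t))))
       \<and> (SUP \<nu>\<in>{\<mu>..l}. liminf (\<lambda>t::nat. ereal (spectral_norm (companion p (\<lambda>j. q j + r j * \<nu>) ^\<^sub>m t) powr (1 / real t))))
           \<ge> liminf (\<lambda>t::nat. SUP \<nu>\<in>{\<mu>..l}. ereal (spectral_norm (companion p (\<lambda>j. q j + r j * \<nu>) ^\<^sub>m t) powr (1 / real t)))"
proof -
  define C where "C \<nu> = companion p (\<lambda>j. q j + r j * \<nu>)" for \<nu>
  have p: "0 < p" using assms(1) by simp
  have C: "C \<nu> \<in> carrier_mat p p" for \<nu> unfolding C_def companion_def by simp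
  have cont: "continuous_on UNIV (\<lambda>\<nu>. C \<nu> $$ (i,j))" if "i < p" "j < p" for i j
    unfolding C_def companion_def using that by (cases "i = p - 1") (auto intro!: continuous_intros)
  have gelfand: "(SUP \<nu>\<in>{\<mu>..l}. ereal (real_spectral_radius (C \<nu>)))
      = (SUP \<nu>\<in>{\<mu>..l}. liminf (\<lambda>t. ereal (spectral_norm (C \<nu> ^\<^sub>m t) powr (1 / real t))))"
    by (simp add: liminf_root_spectral_norm_pow_eq_real_spectral_radius[OF C p])
  show ?thesis
    using gelfand liminf_SUP_root_spectral_norm_pow_le_SUP[OF C p cont compact_Icc, of \<mu> l]
    unfolding C_def by simp
qed

end
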